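(* Let $0\le r\le n$, let $A\in\mathcal{A}_{n+1,r+1}$ have block-ends $b_1>\dots>b_{r+1}$, and fix a tiling of $\Gamma(X(A))$. At the termination of the fusion-exchange algorithm applied to $A$, the union of the labels of the horizontal edges of the northwest boundary is $\{b_1+1,\dots,n+1\}$, the union of the labels of the vertical edges of the northwest boundary is $\{1,\dots,b_{r+1}-1\}$, and the union of the labels of the diagonal edges of the northwest boundary is $\{b_{r+1}+1,\dots,b_1\}$.
   Context: Words and diagrams. For $0\le r\le n$ let $B_n^r$ be the set of words $X\in\{H,L,0\}^n$ with exactly $r$ letters $L$. If $X$ has $k$ letters $H$, $r$ letters $L$ and $\ell$ letters $0$, its rhombic diagram $\Gamma(X)$ is the closed region bounded by two paths of unit steps, using the directions west (horizontal), south (vertical) and southwest (diagonal: a fixed unit vector strictly between west and south), both going from a point $P$ to a point $Q$: the northwest boundary consists of $\ell$ west steps, then $r$ southwest steps, then $k$ south steps; the southeast boundary is obtained by reading $X$ left to right and taking a west step for each $0$, a southwest step for each $L$, a south step for each $H$. A tiling of $\Gamma(X)$ is a tiling by unit rhombi of three kinds: squares (horizontal and vertical edges), tall rhombi (vertical and diagonal edges), short rhombi (horizontal and diagonal edges). Each tile has two edges on its lower-right side: its east edge (vertical for squares and tall rhombi, diagonal for short rhombi) and its south edge (horizontal for squares and short rhombi, diagonal for tall rhombi); the parallel edges on its upper-left side are its west and north edges. Assemblées. An assemblée of size $(m,s)$ is a collection of $s$ nonempty, pairwise disjoint, linearly ordered sets (blocks) with union $\{1,\dots,m\}$; the last element of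 a block is its block-end. Blocks are listed in the canonical order with decreasing block-ends, and the assemblée is identified with the concatenated word. $\mathcal{A}_{m,s}$ is the set of these. For $A\in\mathcal{A}_{n+1,r+1}$ with block-ends $b_1>\dots>b_{r+1}$, a non-block-end element $x$ is an increase if $x+1$ appears to the right of $x$ in $A$, and a decrease otherwise (so $n+1$, if not a block-end, is a decrease). $X(A)\in B_n^r$ is obtained from $A$ by deleting its last letter $b_{r+1}$ and replacing each increase by $H$, each decrease by $0$ and each remaining block-end by $L$. Fusion-exchange algorithm. A label is a finite, possibly empty, set of consecutive integers; for labels $E,S$ write $E\succ S$ if both are nonempty and $\min E=\max S+1$. Given $A\in\mathcal{A}_{n+1,r+1}$ and a tiling of $\Gamma(X(A))$: initially the southeast boundary edges, in order from $P$ to $Q$, receive the singleton labels of the letters of $A$ from left to right, $b_{r+1}$ omitted. Step: choose a tile whose east and south edges are labeled, say by $E$ and $S$, and whose west and north edges are not. (R I) If $E\succ S$ and the south edge is horizontal: west edge gets $E\cup S$, north edge gets $\emptyset$, place $\alpha$ in the tile. (R II) If $S\succ E$ and the east edge is vertical: north edge gets $E\cup S$, west edge gets $\emptyset$, place $\beta$. (R III) Otherwise: west edge gets $E$, north edge gets $S$, and place $q$ if $E\ne\emptyset$ and $S\ne\emptyset$. Repeat until every edge is labeled (termination). *)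

theory Defs
  imports Main
begin

datatype letter = H | L | Z  (* Z stands for the letter 0 *)

text \<open>An assemblee of size (m,s) is represented by its list of blocks, each block a
nonempty list (its linear order), listed in canonical order (strictly decreasing
block-ends, the block-end being the last element of the block).  The concatenated
word is concat bs.\<close>

definition assemblees :: "nat \<Rightarrow> nat \<Rightarrow> nat list list set" where
  "assemblees m s = {bs. length bs = s \<and> (\<forall>b\<in>set bs. b \<noteq> []) \<and>
      distinct (concat bs) \<and> set (concat bs) = {1..m} \<and>
      sorted_wrt (>) (map last bs)}"

definition block_ends :: "nat list list \<Rightarrow> nat list" where
  "block_ends bs = map last bs"

definition appears_right_succ :: "nat list \<Rightarrow> nat \<Rightarrow> bool" where
  "appears_right_succ w x \<longleftrightarrow>
     (\<exists>i j. i < j \<and> j < length w \<and> w ! i = x \<and> w ! j = Suc x)"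

definition is_increase :: "nat list list \<Rightarrow> nat \<Rightarrow> bool" where
  "is_increase bs x \<longleftrightarrow> x \<notin> set (block_ends bs) \<and> appears_right_succ (concat bs) x"

definition is_decrease :: "nat list list \<Rightarrow> nat \<Rightarrow> bool" where
  "is_decrease bs x \<longleftrightarrow> x \<notin> set (block_ends bs) \<and> \<not> appears_right_succ (concat bs) x"

definition Xword :: "nat list list \<Rightarrow> letter list" where
  "Xword bs = map (\<lambda>x. if is_increase bs x then H else if is_decrease bs x then Z else L)
                  (butlast (concat bs))"

datatype dir = West | Diag | South   (* horizontal, diagonal (southwest), vertical *)

fun dir_rank :: "dir \<Rightarrow> nat" where
  "dir_rank West = 0" | "dir_rank Diag = 1" | "dir_rank South = 2"

fun dir_of :: "letter \<Rightarrow> dir" where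
  "dir_of Z = West" | "dir_of L = Diag" | "dir_of H = South"

text \<open>Southeast boundary of Gamma(X), as the sequence of step directions from P to Q.\<close>
definition se_boundary :: "letter list \<Rightarrow> dir list" where
  "se_boundary X = map dir_of X"

definition nw_boundary :: "letter list \<Rightarrow> dir list" where
  "nw_boundary X = replicate (count_list X Z) West @ replicate (count_list X L) Diag
                   @ replicate (count_list X H) South"

text \<open>Combinatorial model of a tiling (together with an order of placement of its tiles):
a tile whose east and south edges are consecutive edges i, i+1 of the current path
from P to Q (east edge first) is removed, replacing these two edges by its north and
west edges (north edge first).  Squares: (South,West) to (West,South); tall rhombi:
(South,Diag) to (Diag,South); short rhombi: (Diag,West) to (West,Diag).  Thus a tile
is exactly an adjacent swap of a pair x,y with rank y < rank x.\<close>

fun valid_swaps :: "nat list \<Rightarrow> dir list \<Rightarrow> bool" where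
  "valid_swaps [] w = True"
| "valid_swaps (i # is) w =
     (Suc i < length w \<and> dir_rank (w ! Suc i) < dir_rank (w ! i) \<and>
      valid_swaps is (w[i := w ! Suc i, Suc i := w ! i]))"

fun apply_swaps :: "nat list \<Rightarrow> dir list \<Rightarrow> dir list" where
  "apply_swaps [] w = w"
| "apply_swaps (i # is) w = apply_swaps is (w[i := w ! Suc i, Suc i := w ! i])"

definition is_tiling_order :: "letter list \<Rightarrow> nat list \<Rightarrow> bool" where
  "is_tiling_order X ts \<longleftrightarrow> valid_swaps ts (se_boundary X) \<and>
                            apply_swaps ts (se_boundary X) = nw_boundary X"

type_synonym label = "nat set"

definition label_succ :: "label \<Rightarrow> label \<Rightarrow> bool" (infix "\<succ>\<^sub>l" 50) where
  "E \<succ>\<^sub>l S \<longleftrightarrow> E \<noteq> {} \<and> S \<noteq> {} \<and> Min E = Max S + 1"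

text \<open>Processing the tile at positions i (east edge, label E) and i+1 (south edge,
label S) of the current labelled path; the new path has the north edge at
position i and the west edge at position i+1.\<close>
definition fe_step :: "(dir \<times> label) list \<Rightarrow> nat \<Rightarrow> (dir \<times> label) list" where
  "fe_step st i =
    (let (x, E) = st ! i; (y, S) = st ! Suc i;
         (north, west) =
           (if E \<succ>\<^sub>l S \<and> y = West then ({}, E \<union> S)
            else if S \<succ>\<^sub>l E \<and> x = South then (E \<union> S, {})
            else (S, E))
     in st[i := (y, north), Suc i := (x, west)])"

fun fe_run :: "nat list \<Rightarrow> (dir \<times> label) list \<Rightarrow> (dir \<times> label) list" where
  "fe_run [] st = st"
| "fe_run (i # is) st = fe_run is (fe_step st i)"

definition fe_init :: "nat list list \<Rightarrow> (dir \<times> label) list" where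
  "fe_init bs = zip (se_boundary (Xword bs)) (map (\<lambda>a. {a}) (butlast (concat bs)))"

definition label_union :: "dir \<Rightarrow> (dir \<times> label) list \<Rightarrow> nat set" where
  "label_union d st = \<Union> {E. (d, E) \<in> set st}"

end

theory Submission
  imports Defs
begin

(* The labels obey an invariant throughout the algorithm: they partition
   {1..n+1} - {b_(r+1)} into intervals; every block-end is the maximum of its label; the edge
   carrying a nonempty label has the direction that X(A) gives to the maximum of the label
   (diagonal for a block-end, vertical for an increase, horizontal for a decrease); and if a
   non-block-end c and c+1 lie in different labels, the edge of c precedes the edge of c+1
   exactly when c is an increase.  A fusion merges two adjacent intervals.  An exchange can only
   break the last condition when c and c+1 sit in the two exchanged labels; these are then
   adjacent intervals, which is precisely the situation taken over by rules I and II.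

   At termination the path reads horizontal, diagonal, vertical, so the last condition forces
   c+1 onto an edge of the same direction as c unless c is a block-end.  Walking upwards from a
   horizontal label would thus reach the block-end b_1, and walking upwards from a vertical label
   above b_(r+1) would leave {1..n+1}; a diagonal label is an interval whose maximum is a
   block-end and which avoids b_(r+1). *)

section \<open>Intervals of natural numbers\<close>

definition consecutive :: "nat set \<Rightarrow> bool" where
  "consecutive A \<longleftrightarrow> (\<forall>x\<in>A. \<forall>z\<in>A. {x..z} \<subseteq> A)"

lemma consecutive_empty [simp]: "consecutive {}"
  by (simp add: consecutive_def)

lemma consecutive_singleton [simp]: "consecutive {c}"
  by (simp add: consecutive_def)

lemma consecutive_Max:
  assumes "consecutive A" "finite A" "c \<in> A" "Suc c \<notin> A"
  shows "Max A = c"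
proof (rule Max_eqI)
  show "e \<le> c" if "e \<in> A" for e
  proof (rule ccontr)
    assume "\<not> e \<le> c"
    then have "Suc c \<in> {c..e}" by simp
    then show False using assms that unfolding consecutive_def by blast
  qed
qed (use assms in auto)

lemma consecutive_Min:
  assumes "consecutive A" "finite A" "Suc c \<in> A" "c \<notin> A"
  shows "Min A = Suc c"
proof (rule Min_eqI)
  show "Suc c \<le> e" if "e \<in> A" for e
  proof (rule ccontr)
    assume "\<not> Suc c \<le> e"
    then have "c \<in> {e..Suc c}" by simp
    then show False using assms that unfolding consecutive_def by blast
  qed
qed (use assms in auto)

lemma label_succ_Max_Un:
  assumes "E \<succ>\<^sub>l S" "finite E" "finite S"
  shows "Max (E \<union> S) = Max E"
proof -
  have ne: "E \<noteq> {}" "S \<noteq> {}" and gap: "Min E = Suc (Max S)"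
    using assms(1) by (auto simp: label_succ_def)
  have "Max S \<le> Max E"
    using Min_le[OF assms(2) Max_in[OF assms(2) ne(1)]] gap by simp
  then show ?thesis
    using Max_Un[OF assms(2) ne(1) assms(3) ne(2)] by simp
qed

lemma consecutive_Un_label_succ:
  assumes "E \<succ>\<^sub>l S" "finite E" "finite S" "consecutive E" "consecutive S"
  shows "consecutive (E \<union> S)"
  unfolding consecutive_def
proof (intro ballI subsetI)
  fix x z y assume x: "x \<in> E \<union> S" and z: "z \<in> E \<union> S" and y: "y \<in> {x..z}"
  have ne: "E \<noteq> {}" "S \<noteq> {}" and gap: "Min E = Suc (Max S)"
    using assms(1) by (auto simp: label_succ_def)
  show "y \<in> E \<union> S"
  proof (cases "y \<le> Max S")
    case True
    have "x \<notin> E"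
      using y True gap Min_le[OF assms(2)] by fastforce
    then have "x \<in> S"
      using x by blast
    then have "{x..Max S} \<subseteq> S"
      using assms(3,5) ne unfolding consecutive_def by simp
    then show ?thesis using y True by auto
  next
    case False
    have "z \<notin> S"
      using y False Max_ge[OF assms(3)] by fastforce
    then have "z \<in> E"
      using z by blast
    then have "{Min E..z} \<subseteq> E"
      using assms(2,4) ne unfolding consecutive_def by simp
    then show ?thesis using y False gap by auto
  qed
qed

lemma label_succ_if_adjacent:
  assumes "consecutive E" "consecutive S" "finite E" "finite S" "E \<inter> S = {}"
    and "c \<in> E" "Suc c \<in> S"
  shows "S \<succ>\<^sub>l E" "Max E = c"
proof -
  show "Max E = c"
    using assms by (intro consecutive_Max) auto
  moreover have "Min S = Suc c"
    using assms by (intro consecutive_Min) auto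
  ultimately show "S \<succ>\<^sub>l E"
    using assms(6,7) by (auto simp: label_succ_def)
qed

section \<open>The invariant of the fusion-exchange algorithm\<close>

definition elem_dir :: "nat set \<Rightarrow> (nat \<Rightarrow> bool) \<Rightarrow> nat \<Rightarrow> dir" where
  "elem_dir B inc c = (if c \<in> B then Diag else if inc c then South else West)"

definition consistent_edge :: "nat set \<Rightarrow> (nat \<Rightarrow> bool) \<Rightarrow> dir \<times> label \<Rightarrow> bool" where
  "consistent_edge B inc e \<longleftrightarrow> consecutive (snd e) \<and> B \<inter> snd e \<subseteq> {Max (snd e)} \<and>
     (snd e \<noteq> {} \<longrightarrow> fst e = elem_dir B inc (Max (snd e)))"

lemma consistent_edge_empty [simp]: "consistent_edge B inc (d, {})"
  by (simp add: consistent_edge_def)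

lemma consistent_edge_merge:
  assumes "consistent_edge B inc (d, E)" "consistent_edge B inc (d', S)"
    and "E \<succ>\<^sub>l S" "finite E" "finite S" "d' \<noteq> Diag"
  shows "consistent_edge B inc (d, E \<union> S)"
proof -
  have Max_eq: "Max (E \<union> S) = Max E"
    using assms(3-5) by (rule label_succ_Max_Un)
  have "S \<noteq> {}"
    using assms(3) by (simp add: label_succ_def)
  then have "B \<inter> S = {}"
    using assms(2,6) by (auto simp: consistent_edge_def elem_dir_def)
  moreover have "E \<noteq> {}"
    using assms(3) by (simp add: label_succ_def)
  moreover have "consecutive (E \<union> S)"
    using assms consecutive_Un_label_succ by (simp add: consistent_edge_def)
  ultimately show ?thesis
    using assms(1) by (auto simp: consistent_edge_def Max_eq)
qed

abbreviation lab :: "(dir \<times> label) list \<Rightarrow> nat \<Rightarrow> label" where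
  "lab st j \<equiv> snd (st ! j)"

locale fe_invariant =
  fixes U :: "nat set" and B :: "nat set" and inc :: "nat \<Rightarrow> bool"
    and st :: "(dir \<times> label) list"
  assumes finite_U: "finite U"
    and labels_cover: "(\<Union>j<length st. lab st j) = U"
    and labels_disjoint: "\<And>j k. j < length st \<Longrightarrow> k < length st \<Longrightarrow> j \<noteq> k \<Longrightarrow> lab st j \<inter> lab st k = {}"
    and edges_consistent: "\<And>e. e \<in> set st \<Longrightarrow> consistent_edge B inc e"
    \<comment> \<open>non-strict, so that monotone relocations of the labels preserve it\<close>
    and succ_position: "\<And>j k c. j < length st \<Longrightarrow> k < length st \<Longrightarrow> c \<in> lab st j \<Longrightarrow>
       Suc c \<in> lab st k \<Longrightarrow> c \<notin> B \<Longrightarrow> (inc c \<longrightarrow> j \<le> k) \<and> (\<not> inc c \<longrightarrow> k \<le> j)"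
begin

lemma label_subset: "j < length st \<Longrightarrow> lab st j \<subseteq> U"
  using labels_cover by blast

lemma label_finite: "j < length st \<Longrightarrow> finite (lab st j)"
  using label_subset finite_U by (rule finite_subset)

lemma edge_consistent: "j < length st \<Longrightarrow> consistent_edge B inc (st ! j)"
  by (simp add: edges_consistent)

lemma label_consecutive: "j < length st \<Longrightarrow> consecutive (lab st j)"
  using edge_consistent by (simp add: consistent_edge_def)

lemma dir_Max: "j < length st \<Longrightarrow> lab st j \<noteq> {} \<Longrightarrow> fst (st ! j) = elem_dir B inc (Max (lab st j))"
  using edge_consistent by (simp add: consistent_edge_def)

lemma block_end_Max: "j < length st \<Longrightarrow> b \<in> lab st j \<Longrightarrow> b \<in> B \<Longrightarrow> b = Max (lab st j)"
  using edge_consistent by (auto simp: consistent_edge_def)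

lemma dir_top:
  assumes "j < length st" "c \<in> lab st j" "Suc c \<notin> lab st j"
  shows "fst (st ! j) = elem_dir B inc c"
  using assms dir_Max consecutive_Max[OF label_consecutive label_finite] by fastforce

lemma adjacent_labels:
  assumes "j < length st" "k < length st" "j \<noteq> k" "c \<in> lab st j" "Suc c \<in> lab st k"
  shows "lab st k \<succ>\<^sub>l lab st j" "fst (st ! j) = elem_dir B inc c"
proof -
  have "lab st j \<inter> lab st k = {}"
    using assms(1-3) by (rule labels_disjoint)
  then show "lab st k \<succ>\<^sub>l lab st j"
    using assms by (intro label_succ_if_adjacent label_consecutive label_finite) auto
  show "fst (st ! j) = elem_dir B inc c"
    using assms \<open>lab st j \<inter> lab st k = {}\<close> by (intro dir_top) auto
qed

text \<open>A step of the algorithm moves the label at position \<open>j\<close> to position \<open>\<pi> j\<close>;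
  a fusion is a step with non-injective \<open>\<pi>\<close>.\<close>
lemma relocate:
  assumes len: "length st' = length st"
    and range: "\<And>j. j < length st \<Longrightarrow> \<pi> j < length st"
    and moved: "\<And>j' c. j' < length st \<Longrightarrow> c \<in> lab st' j' \<longleftrightarrow> (\<exists>j<length st. \<pi> j = j' \<and> c \<in> lab st j)"
    and order: "\<And>j k c. j < length st \<Longrightarrow> k < length st \<Longrightarrow> c \<in> lab st j \<Longrightarrow> Suc c \<in> lab st k \<Longrightarrow>
       c \<notin> B \<Longrightarrow> (inc c \<longrightarrow> \<pi> j \<le> \<pi> k) \<and> (\<not> inc c \<longrightarrow> \<pi> k \<le> \<pi> j)"
    and consistent: "\<And>e. e \<in> set st' \<Longrightarrow> consistent_edge B inc e"
  shows "fe_invariant U B inc st'"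
proof
  show "finite U" by (rule finite_U)
  show "(\<Union>j<length st'. lab st' j) = U"
    unfolding labels_cover[symmetric] len using moved range by blast
  show "lab st' j' \<inter> lab st' k' = {}" if "j' < length st'" "k' < length st'" "j' \<noteq> k'" for j' k'
    using that moved labels_disjoint unfolding len by blast
  show "(inc c \<longrightarrow> j' \<le> k') \<and> (\<not> inc c \<longrightarrow> k' \<le> j')"
    if "j' < length st'" "k' < length st'" "c \<in> lab st' j'" "Suc c \<in> lab st' k'" "c \<notin> B" for j' k' c
    using that moved order unfolding len by metis
qed (fact consistent)

lemma relocate_mono:
  assumes "length st' = length st"
    and "\<And>j. j < length st \<Longrightarrow> \<pi> j < length st" "mono \<pi>"
    and "\<And>j' c. j' < length st \<Longrightarrow> c \<in> lab st' j' \<longleftrightarrow> (\<exists>j<length st. \<pi> j = j' \<and> c \<in> lab st j)"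
    and "\<And>e. e \<in> set st' \<Longrightarrow> consistent_edge B inc e"
  shows "fe_invariant U B inc st'"
  using assms by (intro relocate) (auto dest: succ_position monoD)

end

lemma fe_step_eq:
  assumes "st ! i = (x, E)" "st ! Suc i = (y, S)"
  shows "fe_step st i =
    (if E \<succ>\<^sub>l S \<and> y = West then st[i := (y, {}), Suc i := (x, E \<union> S)]
     else if S \<succ>\<^sub>l E \<and> x = South then st[i := (y, E \<union> S), Suc i := (x, {})]
     else st[i := (y, S), Suc i := (x, E)])"
  using assms by (simp add: fe_step_def)

lemma map_fst_fe_step:
  assumes "Suc i < length st"
  shows "map fst (fe_step st i) = (map fst st)[i := map fst st ! Suc i, Suc i := map fst st ! i]"
  using assms by (simp add: fe_step_def case_prod_beta Let_def map_update)

lemma map_fst_fe_run: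
  "valid_swaps ts (map fst st) \<Longrightarrow> map fst (fe_run ts st) = apply_swaps ts (map fst st)"
proof (induction ts arbitrary: st)
  case (Cons i ts)
  let ?w = "map fst st"
  have i: "Suc i < length st"
    using Cons.prems by simp
  have v: "valid_swaps ts (?w[i := ?w ! Suc i, Suc i := ?w ! i])"
    using Cons.prems unfolding valid_swaps.simps by blast
  have eq: "map fst (fe_step st i) = ?w[i := ?w ! Suc i, Suc i := ?w ! i]"
    using i by (rule map_fst_fe_step)
  have "map fst (fe_run ts (fe_step st i)) = apply_swaps ts (map fst (fe_step st i))"
    by (rule Cons.IH) (unfold eq, rule v)
  then show ?case
    unfolding eq by simp
qed simp

context fe_invariant
begin

lemma exchange_preserves:
  assumes i: "Suc i < length st" and xE: "st ! i = (x, E)" and yS: "st ! Suc i = (y, S)"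
    and no_fusion: "\<not> (E \<succ>\<^sub>l S \<and> y = West)" "\<not> (S \<succ>\<^sub>l E \<and> x = South)"
  shows "fe_invariant U B inc (st[i := (y, S), Suc i := (x, E)])"
proof -
  define \<sigma> where "\<sigma> j = (if j = i then Suc i else if j = Suc i then i else j)" for j
  let ?st' = "st[i := st ! Suc i, Suc i := st ! i]"
  have nth': "?st' ! j = st ! \<sigma> j" if "j < length st" for j
    using that i by (simp add: \<sigma>_def nth_list_update)
  have \<sigma>_inv: "\<sigma> j = j' \<longleftrightarrow> j = \<sigma> j'" for j j'
    by (auto simp: \<sigma>_def)
  have "fe_invariant U B inc ?st'"
  proof (rule relocate[where \<pi> = \<sigma>])
    show "c \<in> lab ?st' j' \<longleftrightarrow> (\<exists>j<length st. \<sigma> j = j' \<and> c \<in> lab st j)" if "j' < length st" for j' c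
      using that i nth' \<sigma>_inv by (auto simp: \<sigma>_def)
    show "(inc c \<longrightarrow> \<sigma> j \<le> \<sigma> k) \<and> (\<not> inc c \<longrightarrow> \<sigma> k \<le> \<sigma> j)"
      if jk: "j < length st" "k < length st" and c: "c \<in> lab st j" "Suc c \<in> lab st k" "c \<notin> B"
      for j k c
    proof -
      \<comment> \<open>only \<open>c\<close> and \<open>c + 1\<close> in the two exchanged labels can change their order,
        and then the labels are adjacent intervals, which rules I and II exclude\<close>
      have "j = i \<and> k = Suc i \<or> j = Suc i \<and> k = i \<or> (\<sigma> j \<le> \<sigma> k \<longleftrightarrow> j \<le> k)"
        by (auto simp: \<sigma>_def)
      then consider "j = i" "k = Suc i" | "j = Suc i" "k = i" | "\<sigma> j \<le> \<sigma> k \<longleftrightarrow> j \<le> k"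
        by blast
      then show ?thesis
      proof cases
        case 1
        then have "S \<succ>\<^sub>l E" "x = elem_dir B inc c"
          using adjacent_labels[OF jk _ c(1,2)] xE yS by auto
        then have "\<not> inc c"
          using no_fusion(2) c(3) by (auto simp: elem_dir_def)
        then show ?thesis using 1 by (simp add: \<sigma>_def)
      next
        case 2
        then have "E \<succ>\<^sub>l S" "y = elem_dir B inc c"
          using adjacent_labels[OF jk _ c(1,2)] xE yS by auto
        then have "inc c"
          using no_fusion(1) c(3) by (auto simp: elem_dir_def split: if_splits)
        then show ?thesis using 2 by (simp add: \<sigma>_def)
      next
        case 3
        then show ?thesis
          using succ_position[OF jk c] by (cases "j = k") auto
      qed
    qed
  qed (use i edges_consistent in \<open>auto simp: \<sigma>_def\<close>)
  then show ?thesis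
    using xE yS by simp
qed

lemma fusion_preserves:
  assumes i: "Suc i < length st" and pq: "p = i \<and> q = Suc i \<or> p = Suc i \<and> q = i"
    and consistent: "consistent_edge B inc (d, lab st i \<union> lab st (Suc i))"
  shows "fe_invariant U B inc (st[q := (d', {}), p := (d, lab st i \<union> lab st (Suc i))])"
    (is "fe_invariant U B inc ?st'")
proof (rule relocate_mono[where \<pi> = "\<lambda>j. if j = q then p else j"])
  have lab': "lab ?st' j' =
      (if j' = p then lab st i \<union> lab st (Suc i) else if j' = q then {} else lab st j')" for j'
    using i pq by (cases "j' = p"; cases "j' = q") auto
  show "c \<in> lab ?st' j' \<longleftrightarrow> (\<exists>j<length st. (if j = q then p else j) = j' \<and> c \<in> lab st j)"
    if "j' < length st" for j' c
    using that i pq unfolding lab' by auto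
  show "mono (\<lambda>j. if j = q then p else j)"
    using pq by (auto intro!: monoI)
  have "set ?st' \<subseteq> insert (d, lab st i \<union> lab st (Suc i)) (insert (d', {}) (set st))"
    using set_update_subset_insert[of st q] set_update_subset_insert[of "st[q := (d', {})]" p]
    by blast
  then show "consistent_edge B inc e" if "e \<in> set ?st'" for e
    using that consistent edges_consistent consistent_edge_empty by blast
qed (use i pq in auto)

lemma fe_step_preserves:
  assumes i: "Suc i < length st"
  shows "fe_invariant U B inc (fe_step st i)"
proof -
  obtain x E where xE: "st ! i = (x, E)" by (cases "st ! i")
  obtain y S where yS: "st ! Suc i = (y, S)" by (cases "st ! Suc i")
  have fin: "finite E" "finite S"
    using label_finite[of i] label_finite[OF i] i xE yS by auto
  have cons: "consistent_edge B inc (x, E)" "consistent_edge B inc (y, S)"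
    using edge_consistent[of i] edge_consistent[OF i] i xE yS by auto
  consider (west) "E \<succ>\<^sub>l S" "y = West" | (north) "S \<succ>\<^sub>l E" "x = South" "\<not> (E \<succ>\<^sub>l S \<and> y = West)"
    | (exchange) "\<not> (E \<succ>\<^sub>l S \<and> y = West)" "\<not> (S \<succ>\<^sub>l E \<and> x = South)"
    by blast
  then show ?thesis
  proof cases
    case west
    have "consistent_edge B inc (x, E \<union> S)"
      using consistent_edge_merge[OF cons west(1) fin] west(2) by simp
    then show ?thesis
      using fusion_preserves[OF i, of "Suc i" i x y] fe_step_eq[OF xE yS] west xE yS by simp
  next
    case north
    have "consistent_edge B inc (y, E \<union> S)"
      using consistent_edge_merge[OF cons(2,1) north(1) fin(2,1)] north(2) by (simp add: Un_commute)
    then show ?thesis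
      using fusion_preserves[OF i, of i "Suc i" y x] fe_step_eq[OF xE yS] north xE yS
      by (simp add: list_update_swap)
  next
    case exchange
    then have "fe_step st i = st[i := (y, S), Suc i := (x, E)]"
      unfolding fe_step_eq[OF xE yS] by auto
    then show ?thesis
      using exchange_preserves[OF i xE yS exchange] by simp
  qed
qed

end

lemma fe_invariant_fe_run:
  "fe_invariant U B inc st \<Longrightarrow> valid_swaps ts (map fst st) \<Longrightarrow> fe_invariant U B inc (fe_run ts st)"
proof (induction ts arbitrary: st)
  case (Cons i ts)
  then have "Suc i < length st" by simp
  with Cons show ?case
    by (simp add: fe_invariant.fe_step_preserves map_fst_fe_step)
qed simp

section \<open>Terminal states\<close>

lemma label_union_iff:
  "v \<in> label_union d st \<longleftrightarrow> (\<exists>j<length st. fst (st ! j) = d \<and> v \<in> lab st j)"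
  unfolding label_union_def by (force simp: in_set_conv_nth)

locale fe_terminal = fe_invariant +
  fixes N bmin bmax :: nat
  assumes U_eq: "U = {1..N} - {bmin}"
    and dirs_sorted: "sorted (map (dir_rank \<circ> fst) st)"
    and block_ends_between: "B \<subseteq> {bmin..bmax}"
    and bmax_block_end: "bmax \<in> B"
    and bmax_le: "bmax \<le> N"
    and inc_le: "\<And>c. inc c \<Longrightarrow> Suc c \<le> N"
    and inc_pred_bmin: "\<And>c. c \<in> U \<Longrightarrow> Suc c = bmin \<Longrightarrow> inc c"
begin

lemma dir_inherited:
  assumes jk: "j < length st" "k < length st" and c: "c \<in> lab st j" "Suc c \<in> lab st k"
    and not_diag: "fst (st ! j) \<noteq> Diag"
  shows "fst (st ! k) = fst (st ! j)"
proof (cases "j = k")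
  case False
  have rank_mono: "dir_rank (fst (st ! j')) \<le> dir_rank (fst (st ! k'))"
    if "j' \<le> k'" "k' < length st" for j' k'
    using sorted_nth_mono[OF dirs_sorted that(1)] that by simp
  have dir_c: "fst (st ! j) = elem_dir B inc c"
    using adjacent_labels(2)[OF jk False c] .
  then have "c \<notin> B"
    using not_diag by (auto simp: elem_dir_def)
  show ?thesis
  proof (cases "inc c")
    case True
    then have "dir_rank South \<le> dir_rank (fst (st ! k))"
      using rank_mono[of j k] succ_position[OF jk c \<open>c \<notin> B\<close>] jk dir_c \<open>c \<notin> B\<close>
      by (simp add: elem_dir_def)
    then show ?thesis
      using True dir_c \<open>c \<notin> B\<close> by (cases "fst (st ! k)") (auto simp: elem_dir_def)
  next
    case False
    then have "dir_rank (fst (st ! k)) \<le> dir_rank West"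
      using rank_mono[of k j] succ_position[OF jk c \<open>c \<notin> B\<close>] jk dir_c \<open>c \<notin> B\<close>
      by (simp add: elem_dir_def)
    then show ?thesis
      using False dir_c \<open>c \<notin> B\<close> by (cases "fst (st ! k)") (auto simp: elem_dir_def)
  qed
qed simp

lemma label_union_subset: "label_union d st \<subseteq> U"
proof
  fix v assume "v \<in> label_union d st"
  then obtain j where "j < length st" "v \<in> lab st j"
    by (auto simp: label_union_iff)
  then show "v \<in> U"
    using label_subset by blast
qed

lemma succ_in_label_union:
  assumes "c \<in> label_union d st" "d \<noteq> Diag" "Suc c \<in> U"
  shows "Suc c \<in> label_union d st"
proof -
  obtain j where j: "j < length st" "fst (st ! j) = d" "c \<in> lab st j"
    using assms(1) by (auto simp: label_union_iff)
  obtain k where k: "k < length st" "Suc c \<in> lab st k"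
    using assms(3) labels_cover by blast
  show ?thesis
    using dir_inherited[OF j(1) k(1) j(3) k(2)] j k assms(2) by (auto simp: label_union_iff)
qed

lemma dir_at_label_top:
  assumes "c \<in> label_union d st" "Suc c \<notin> U"
  shows "d = elem_dir B inc c"
proof -
  obtain j where j: "j < length st" "fst (st ! j) = d" "c \<in> lab st j"
    using assms(1) by (auto simp: label_union_iff)
  then show ?thesis
    using dir_top[OF j(1,3)] label_subset[OF j(1)] assms(2) by auto
qed

lemma West_succ:
  assumes "c \<in> label_union West st" "Suc c \<le> N"
  shows "Suc c \<in> label_union West st"
proof -
  have "c \<in> U"
    using assms(1) label_union_subset by blast
  have "Suc c \<noteq> bmin"
  proof
    assume "Suc c = bmin"
    then have "West = elem_dir B inc c"
      using assms(1) U_eq by (intro dir_at_label_top) auto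
    then show False
      using inc_pred_bmin[OF \<open>c \<in> U\<close> \<open>Suc c = bmin\<close>] by (simp add: elem_dir_def split: if_splits)
  qed
  then show ?thesis
    using assms U_eq by (intro succ_in_label_union) auto
qed

lemma South_succ:
  assumes "c \<in> label_union South st" "Suc c \<noteq> bmin"
  shows "Suc c \<in> label_union South st"
proof -
  have "Suc c \<in> U"
  proof (rule ccontr)
    assume "Suc c \<notin> U"
    have "South = elem_dir B inc c"
      using assms(1) \<open>Suc c \<notin> U\<close> by (rule dir_at_label_top)
    then have "Suc c \<le> N"
      using inc_le by (simp add: elem_dir_def split: if_splits)
    then show False
      using \<open>Suc c \<notin> U\<close> assms(2) U_eq by simp
  qed
  then show ?thesis
    using assms(1) by (intro succ_in_label_union) auto
qed

lemma block_end_Diag: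
  assumes "b \<in> B" "b \<in> label_union d st"
  shows "d = Diag"
proof -
  obtain j where j: "j < length st" "fst (st ! j) = d" "b \<in> lab st j"
    using assms(2) by (auto simp: label_union_iff)
  then show ?thesis
    using dir_Max[OF j(1)] block_end_Max[OF j(1,3) assms(1)] assms(1) by (auto simp: elem_dir_def)
qed

lemma West_above: "v \<in> label_union West st \<Longrightarrow> bmax < v"
proof (rule ccontr)
  assume v: "v \<in> label_union West st" and "\<not> bmax < v"
  then have "v \<le> bmax" by simp
  then have "bmax \<in> label_union West st"
  proof (induction rule: dec_induct)
    case (step c)
    then show ?case
      using West_succ bmax_le by simp
  qed (rule v)
  then show False
    using block_end_Diag[OF bmax_block_end] by blast
qed

lemma South_below: "v \<in> label_union South st \<Longrightarrow> v < bmin"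
proof (rule ccontr)
  assume v: "v \<in> label_union South st" and "\<not> v < bmin"
  moreover have "v \<in> U"
    using v label_union_subset by blast
  ultimately have "bmin < v" "v \<le> Suc N"
    using U_eq by auto
  from \<open>v \<le> Suc N\<close> have "Suc N \<in> label_union South st"
  proof (induction rule: dec_induct)
    case (step c)
    then show ?case
      using South_succ \<open>bmin < v\<close> by simp
  qed (rule v)
  then have "Suc N \<in> U"
    using label_union_subset by blast
  then show False
    using U_eq by simp
qed

lemma Diag_between: "v \<in> label_union Diag st \<Longrightarrow> bmin < v \<and> v \<le> bmax"
proof -
  assume "v \<in> label_union Diag st"
  then obtain j where j: "j < length st" "fst (st ! j) = Diag" "v \<in> lab st j"
    by (auto simp: label_union_iff)
  define m where "m = Max (lab st j)"
  have m: "m \<in> lab st j" "v \<le> m"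
    using Max_in[OF label_finite[OF j(1)]] Max_ge[OF label_finite[OF j(1)] j(3)] j(3)
    by (auto simp: m_def)
  have "m \<in> B"
    using dir_Max[OF j(1)] j by (fastforce simp: m_def elem_dir_def split: if_splits)
  then have "bmin \<le> m" "m \<le> bmax"
    using block_ends_between by auto
  have "bmin \<notin> lab st j"
    using label_subset[OF j(1)] U_eq by auto
  moreover have "{v..m} \<subseteq> lab st j"
    using label_consecutive[OF j(1)] j(3) m(1) by (simp add: consecutive_def)
  ultimately have "bmin < v"
    using \<open>bmin \<le> m\<close> by (meson atLeastAtMost_iff not_less subsetD)
  with m \<open>m \<le> bmax\<close> show ?thesis by simp
qed

lemma U_subset_label_unions: "U \<subseteq> label_union West st \<union> label_union Diag st \<union> label_union South st"
proof
  fix v assume "v \<in> U"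
  then obtain j where "j < length st" "v \<in> lab st j"
    using labels_cover by blast
  then show "v \<in> label_union West st \<union> label_union Diag st \<union> label_union South st"
    by (cases "fst (st ! j)") (auto simp: label_union_iff)
qed

theorem label_unions:
  "label_union West st = {bmax + 1..N} \<and> label_union South st = {1..<bmin} \<and>
   label_union Diag st = {bmin + 1..bmax}"
proof -
  have "bmin \<le> bmax"
    using block_ends_between bmax_block_end by auto
  have in_U: "1 \<le> v \<and> v \<le> N \<and> v \<noteq> bmin" if "v \<in> label_union d st" for v d
    using subsetD[OF label_union_subset that] U_eq by simp
  have cover: "v \<in> label_union West st \<or> v \<in> label_union Diag st \<or> v \<in> label_union South st"
    if "1 \<le> v" "v \<le> N" "v \<noteq> bmin" for v
    using U_subset_label_unions that U_eq by auto
  have "label_union West st = {bmax + 1..N}"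
  proof (intro set_eqI iffI)
    fix v assume "v \<in> {bmax + 1..N}"
    then show "v \<in> label_union West st"
      using cover[of v] South_below[of v] Diag_between[of v] \<open>bmin \<le> bmax\<close> by auto
  qed (use in_U West_above in force)
  moreover have "label_union South st = {1..<bmin}"
  proof (intro set_eqI iffI)
    fix v assume "v \<in> {1..<bmin}"
    then show "v \<in> label_union South st"
      using cover[of v] West_above[of v] Diag_between[of v] \<open>bmin \<le> bmax\<close> bmax_le by auto
  qed (use in_U South_below in force)
  moreover have "label_union Diag st = {bmin + 1..bmax}"
  proof (intro set_eqI iffI)
    fix v assume "v \<in> {bmin + 1..bmax}"
    then show "v \<in> label_union Diag st"
      using cover[of v] West_above[of v] South_below[of v] bmax_le by auto
  qed (use Diag_between in force)
  ultimately show ?thesis by blast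
qed

end

section \<open>Assemblees and the initial labelling\<close>

lemma sorted_wrt_greater_bounds:
  "sorted_wrt (>) xs \<Longrightarrow> x \<in> set xs \<Longrightarrow> last xs \<le> x \<and> x \<le> (hd xs :: nat)"
proof (induction xs)
  case (Cons a xs)
  then show ?case
    using last_in_set hd_in_set by (cases "xs = []") fastforce+
qed simp

lemma appears_right_succ_iff:
  assumes "distinct w" "i < length w" "j < length w" "w ! i = c" "w ! j = Suc c"
  shows "appears_right_succ w c \<longleftrightarrow> i < j"
proof
  assume "appears_right_succ w c"
  then obtain i' j' where ij': "i' < j'" "j' < length w" "w ! i' = c" "w ! j' = Suc c"
    unfolding appears_right_succ_def by blast
  then have "i' = i" "j' = j"
    using assms nth_eq_iff_index_eq[OF assms(1)] by (metis order.strict_trans)+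
  then show "i < j"
    using ij'(1) by simp
next
  assume "i < j"
  then show "appears_right_succ w c"
    using assms unfolding appears_right_succ_def by blast
qed

lemma dir_of_Xword_letter:
  "dir_of (if is_increase bs x then H else if is_decrease bs x then Z else L) =
   elem_dir (set (block_ends bs)) (appears_right_succ (concat bs)) x"
  by (simp add: elem_dir_def is_increase_def is_decrease_def)

locale assemblee =
  fixes bs :: "nat list list" and m s :: nat
  assumes bs_assemblee: "bs \<in> assemblees m s" and s_pos: "0 < s"
begin

abbreviation "word \<equiv> concat bs"
abbreviation "ends \<equiv> set (block_ends bs)"
abbreviation "inc \<equiv> appears_right_succ (concat bs)"
abbreviation "bmin \<equiv> last (block_ends bs)"
abbreviation "bmax \<equiv> hd (block_ends bs)"

lemma distinct_word: "distinct word" and set_word: "set word = {1..m}"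
  and blocks_nonempty: "\<And>b. b \<in> set bs \<Longrightarrow> b \<noteq> []" and ends_sorted: "sorted_wrt (>) (block_ends bs)"
  and bs_nonempty: "bs \<noteq> []"
  using bs_assemblee s_pos by (auto simp: assemblees_def block_ends_def)

lemma length_word: "length word = m"
  using distinct_card[OF distinct_word] set_word by simp

lemma last_word: "last word = bmin"
proof -
  have "word = concat (butlast bs) @ last bs"
    by (subst append_butlast_last_id[OF bs_nonempty, symmetric]) simp
  then show ?thesis
    using blocks_nonempty bs_nonempty by (simp add: block_ends_def last_map)
qed

lemma ends_subset_word: "ends \<subseteq> set word"
proof
  fix x assume "x \<in> ends"
  then obtain b where "b \<in> set bs" "x = last b"
    by (auto simp: block_ends_def)
  then show "x \<in> set word"
    using blocks_nonempty[of b] by (auto intro: bexI[of _ b])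
qed

lemma ends_between: "ends \<subseteq> {bmin..bmax}"
  using sorted_wrt_greater_bounds[OF ends_sorted] by auto

lemma bmax_in_ends: "bmax \<in> ends"
  using bs_nonempty by (simp add: block_ends_def hd_map)

lemma inc_le:
  assumes "inc c"
  shows "Suc c \<le> m"
proof -
  obtain j where "j < length word" "word ! j = Suc c"
    using assms unfolding appears_right_succ_def by blast
  then have "Suc c \<in> set word"
    by (metis nth_mem)
  then show ?thesis
    unfolding set_word by simp
qed

lemma word_ne: "word \<noteq> []"
  using bs_nonempty blocks_nonempty by (metis concat_eq_Nil_conv list.set_sel(1))

lemma nth_word_last: "word ! (m - 1) = bmin"
  using last_word last_conv_nth[OF word_ne] length_word by simp

lemma inc_pred_bmin:
  assumes "c \<in> {1..m} - {bmin}" "Suc c = bmin"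
  shows "inc c"
proof -
  have "c \<in> set word"
    using assms(1) unfolding set_word by simp
  then obtain p where p: "p < length word" "word ! p = c"
    by (metis in_set_conv_nth)
  have "p \<noteq> m - 1"
    using p nth_word_last assms(1) by auto
  then have "p < m - 1"
    using p length_word by simp
  then show ?thesis
    using appears_right_succ_iff[OF distinct_word p(1) _ p(2), of "m - 1"] nth_word_last assms(2)
      length_word word_ne by simp
qed

lemma nth_fe_init:
  assumes "j < m - 1"
  shows "fe_init bs ! j = (elem_dir ends inc (word ! j), {word ! j})"
  using assms length_word
  by (simp add: fe_init_def se_boundary_def Xword_def nth_butlast dir_of_Xword_letter)

lemma length_fe_init: "length (fe_init bs) = m - 1"
  using length_word by (simp add: fe_init_def se_boundary_def Xword_def)

lemma map_fst_fe_init: "map fst (fe_init bs) = se_boundary (Xword bs)"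
  unfolding fe_init_def by (rule map_fst_zip) (simp add: se_boundary_def Xword_def)

lemma fe_invariant_fe_init: "fe_invariant ({1..m} - {bmin}) ends inc (fe_init bs)"
proof
  have nth_inj: "word ! j = word ! k \<longleftrightarrow> j = k" if "j < m" "k < m" for j k
    using that distinct_word length_word by (simp add: nth_eq_iff_index_eq)
  show "finite ({1..m} - {bmin})"
    by simp
  show "(\<Union>j<length (fe_init bs). lab (fe_init bs) j) = {1..m} - {bmin}"
  proof (intro set_eqI iffI)
    fix v assume "v \<in> (\<Union>j<length (fe_init bs). lab (fe_init bs) j)"
    then obtain j where j: "j < m - 1" "v = word ! j"
      by (auto simp: length_fe_init nth_fe_init)
    then have "j < length word" "v \<noteq> bmin"
      using length_word nth_inj[of j "m - 1"] nth_word_last by auto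
    then have "v \<in> set word"
      using j(2) by (metis nth_mem)
    with \<open>v \<noteq> bmin\<close> show "v \<in> {1..m} - {bmin}"
      unfolding set_word by simp
  next
    fix v assume v: "v \<in> {1..m} - {bmin}"
    then have "v \<in> set word"
      unfolding set_word by simp
    then obtain j where "j < m" "word ! j = v"
      using length_word by (metis in_set_conv_nth)
    moreover have "j \<noteq> m - 1"
      using v nth_word_last calculation by auto
    ultimately show "v \<in> (\<Union>j<length (fe_init bs). lab (fe_init bs) j)"
      by (auto simp: length_fe_init nth_fe_init)
  qed
  show "lab (fe_init bs) j \<inter> lab (fe_init bs) k = {}"
    if "j < length (fe_init bs)" "k < length (fe_init bs)" "j \<noteq> k" for j k
    using that nth_inj[of j k] by (simp add: length_fe_init nth_fe_init)
  show "consistent_edge ends inc e" if "e \<in> set (fe_init bs)" for e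
    using that by (auto simp: in_set_conv_nth length_fe_init nth_fe_init consistent_edge_def)
  show "(inc c \<longrightarrow> j \<le> k) \<and> (\<not> inc c \<longrightarrow> k \<le> j)"
    if "j < length (fe_init bs)" "k < length (fe_init bs)" "c \<in> lab (fe_init bs) j"
      "Suc c \<in> lab (fe_init bs) k" for j k c
    using that appears_right_succ_iff[OF distinct_word, of j k c] length_word
    by (auto simp: length_fe_init nth_fe_init)
qed

lemma fe_terminal_if_sorted:
  assumes "fe_invariant ({1..m} - {bmin}) ends inc st" "sorted (map (dir_rank \<circ> fst) st)"
  shows "fe_terminal ({1..m} - {bmin}) ends inc st m bmin bmax"
proof (intro fe_terminal.intro fe_terminal_axioms.intro assms)
  have "bmax \<in> set word"
    using bmax_in_ends ends_subset_word by blast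
  then show "bmax \<le> m"
    unfolding set_word by simp
qed (use ends_between bmax_in_ends inc_le inc_pred_bmin in blast)+

end

theorem lemma3p4:
  fixes n r :: nat and bs :: "nat list list" and ts :: "nat list"
  assumes "r \<le> n"
    and "bs \<in> assemblees (n + 1) (r + 1)"
    and "is_tiling_order (Xword bs) ts"
  shows "label_union West (fe_run ts (fe_init bs)) = {hd (block_ends bs) + 1 .. n + 1}
       \<and> label_union South (fe_run ts (fe_init bs)) = {1 ..< last (block_ends bs)}
       \<and> label_union Diag (fe_run ts (fe_init bs)) = {last (block_ends bs) + 1 .. hd (block_ends bs)}"
proof -
  interpret assemblee bs "n + 1" "r + 1"
    using assms(2) by unfold_locales simp_all
  have valid: "valid_swaps ts (map fst (fe_init bs))"
    and final: "apply_swaps ts (map fst (fe_init bs)) = nw_boundary (Xword bs)"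
    using assms(3) by (simp_all add: is_tiling_order_def map_fst_fe_init)
  have "sorted (map (dir_rank \<circ> fst) (fe_run ts (fe_init bs)))"
    using map_fst_fe_run[OF valid] final
    by (simp add: nw_boundary_def sorted_append flip: map_map)
  then interpret fe_terminal "{1..n + 1} - {bmin}" ends inc "fe_run ts (fe_init bs)"
      "n + 1" bmin bmax
    using fe_terminal_if_sorted fe_invariant_fe_run[OF fe_invariant_fe_init valid] by blast
  show ?thesis
    by (rule label_unions)
qed

end
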